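(* Let $n \ge 1$ and let $N$ be a $\lambda$-term such that $N a_1 a_2 \ldots a_n =_\beta a_1 a_2 \ldots a_n (N a_1 a_2 \ldots a_n)$ for distinct variables $a_1,\dots,a_n$ not free in $N$. Then $N\mathbf{I}\cdots\mathbf{I}$, with $n-1$ copies of $\mathbf{I}\equiv\lambda x.x$, is a fixed point combinator.
   Context: Untyped $\lambda$-calculus modulo $\alpha$-conversion; application associates to the left, so $a_1a_2\ldots a_n(P)$ means $(\cdots(a_1a_2)\cdots a_n)P$. A term $Y$ is a fixed point combinator if $Yx =_\beta x(Yx)$ for a variable $x$ not free in $Y$. *)

theory Defs
  imports Main
begin

text \<open>Untyped lambda terms in de Bruijn notation (alpha-conversion is built in).
  Free variables are the loose indices; a variable "a" is represented by Var a
  occurring outside all binders.\<close>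

datatype dB = Var nat | App dB dB | Abs dB

primrec lift :: "dB \<Rightarrow> nat \<Rightarrow> dB" where
  "lift (Var i) k = (if i < k then Var i else Var (i + 1))"
| "lift (App s t) k = App (lift s k) (lift t k)"
| "lift (Abs s) k = Abs (lift s (k + 1))"

primrec subst :: "dB \<Rightarrow> dB \<Rightarrow> nat \<Rightarrow> dB" where
  "subst (Var i) s k = (if k < i then Var (i - 1) else if i = k then s else Var i)"
| "subst (App t u) s k = App (subst t s k) (subst u s k)"
| "subst (Abs t) s k = Abs (subst t (lift s 0) (k + 1))"

inductive beta :: "dB \<Rightarrow> dB \<Rightarrow> bool" where
  beta: "beta (App (Abs s) t) (subst s t 0)"
| appL: "beta s t \<Longrightarrow> beta (App s u) (App t u)"
| appR: "beta s t \<Longrightarrow> beta (App u s) (App u t)"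
| abs: "beta s t \<Longrightarrow> beta (Abs s) (Abs t)"

definition beta_eq :: "dB \<Rightarrow> dB \<Rightarrow> bool" where
  "beta_eq = equivclp beta"

primrec fv :: "dB \<Rightarrow> nat set" where
  "fv (Var i) = {i}"
| "fv (App s t) = fv s \<union> fv t"
| "fv (Abs t) = {i. Suc i \<in> fv t}"

definition apps :: "dB \<Rightarrow> dB list \<Rightarrow> dB" where
  "apps M Ps = foldl App M Ps"

definition I_comb :: dB where
  "I_comb = Abs (Var 0)"

text \<open>Y is a fixed point combinator: Y x =beta x (Y x) for a variable x not free in Y
  (stated for every such x; by renaming this is equivalent to "for some such x").\<close>
definition is_fpc :: "dB \<Rightarrow> bool" where
  "is_fpc Y \<longleftrightarrow> (\<forall>x. x \<notin> fv Y \<longrightarrow> beta_eq (App Y (Var x)) (App (Var x) (App Y (Var x))))"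

end

theory Submission
  imports Defs
begin

text \<open>Beta-conversion is stable under simultaneous substitution, so substituting arbitrary
  terms M1, ..., Mn for the fresh variables a1, ..., an turns the hypothesis into
  N M1 ... Mn = M1 ... Mn (N M1 ... Mn). Taking M1 = ... = M(n-1) = I and Mn = x,
  the head I ... I x reduces to x, so Y = N I ... I satisfies Y x = x (Y x).\<close>

lemma equivclp_map:
  assumes "\<And>s t. r s t \<Longrightarrow> r' (f s) (f t)" and "equivclp r s t"
  shows "equivclp r' (f s) (f t)"
  using assms(2)
proof (induction rule: equivclp_induct)
  case base
  show ?case by simp
next
  case (step t u)
  then show ?case
    using assms(1) by (meson equivclp_into_equivclp)
qed

lemma beta_eq_trans [trans]: "beta_eq s t \<Longrightarrow> beta_eq t u \<Longrightarrow> beta_eq s u"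
  unfolding beta_eq_def by (rule equivclp_trans)

lemma beta_into_beta_eq: "beta s t \<Longrightarrow> beta_eq s t"
  unfolding beta_eq_def by blast

lemma beta_eq_appL: "beta_eq s t \<Longrightarrow> beta_eq (App s u) (App t u)"
  unfolding beta_eq_def by (rule equivclp_map[where f = "\<lambda>s. App s u"]) (rule beta.appL)

primrec liftn :: "nat \<Rightarrow> dB \<Rightarrow> nat \<Rightarrow> dB" where
  "liftn n (Var i) k = (if i < k then Var i else Var (i + n))"
| "liftn n (App s t) k = App (liftn n s k) (liftn n t k)"
| "liftn n (Abs s) k = Abs (liftn n s (k + 1))"

lemma liftn_0 [simp]: "liftn 0 t k = t"
  by (induction t arbitrary: k) auto

lemma lift_liftn: "i \<le> j \<Longrightarrow> j \<le> i + n \<Longrightarrow> lift (liftn n t i) j = liftn (Suc n) t i"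
  by (induction t arbitrary: i j) auto

lemma subst_liftn: "i \<le> j \<Longrightarrow> j \<le> i + n \<Longrightarrow> subst (liftn (Suc n) t i) u j = liftn n t i"
  by (induction t arbitrary: i j u) auto

text \<open>psub \<tau> k t substitutes \<tau> i for every free variable i of t simultaneously;
  k is the number of binders already entered.\<close>

primrec psub :: "(nat \<Rightarrow> dB) \<Rightarrow> nat \<Rightarrow> dB \<Rightarrow> dB" where
  "psub \<tau> k (Var i) = (if i < k then Var i else liftn k (\<tau> (i - k)) 0)"
| "psub \<tau> k (App s t) = App (psub \<tau> k s) (psub \<tau> k t)"
| "psub \<tau> k (Abs t) = Abs (psub \<tau> (k + 1) t)"

lemma lift_psub: "j \<le> k \<Longrightarrow> lift (psub \<tau> k t) j = psub \<tau> (k + 1) (lift t j)"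
  by (induction t arbitrary: k j) (auto simp: lift_liftn)

lemma psub_subst:
  "j \<le> k \<Longrightarrow> psub \<tau> k (subst s t j) = subst (psub \<tau> (k + 1) s) (psub \<tau> k t) j"
  by (induction s arbitrary: k j t) (auto simp: subst_liftn lift_psub)

lemma beta_psub: "beta s t \<Longrightarrow> beta (psub \<tau> k s) (psub \<tau> k t)"
proof (induction s t arbitrary: k rule: beta.induct)
  case (beta s t)
  then show ?case
    using psub_subst[of 0 k \<tau> s t] by (simp add: beta.beta)
qed (auto intro: beta.intros)

lemma beta_eq_psub: "beta_eq s t \<Longrightarrow> beta_eq (psub \<tau> k s) (psub \<tau> k t)"
  unfolding beta_eq_def by (rule equivclp_map[where f = "psub \<tau> k"]) (rule beta_psub)

lemma psub_fv_id:
  assumes "\<forall>i\<in>fv t. k \<le> i \<longrightarrow> \<tau> (i - k) = Var (i - k)"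
  shows "psub \<tau> k t = t"
  using assms
proof (induction t arbitrary: k)
  case (Abs t)
  have "\<forall>i\<in>fv t. k + 1 \<le> i \<longrightarrow> \<tau> (i - (k + 1)) = Var (i - (k + 1))"
  proof (intro ballI impI)
    fix i
    assume "i \<in> fv t" "k + 1 \<le> i"
    then have "i - 1 \<in> fv (Abs t)" "k \<le> i - 1" by auto
    then show "\<tau> (i - (k + 1)) = Var (i - (k + 1))"
      using Abs.prems by (metis diff_diff_left add.commute)
  qed
  then show ?case using Abs.IH by simp
qed auto

lemma psub_apps: "psub \<tau> k (apps M Ps) = apps (psub \<tau> k M) (map (psub \<tau> k) Ps)"
  unfolding apps_def by (induction Ps arbitrary: M) auto

lemma beta_eq_apps_instance:
  assumes "distinct as" and "as \<noteq> []"
    and "\<forall>a \<in> set as. a \<notin> fv N"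
    and eq: "beta_eq (apps N (map Var as)) (App (apps (Var (hd as)) (map Var (tl as))) (apps N (map Var as)))"
    and "length Ms = length as"
  shows "beta_eq (apps N Ms) (App (apps (hd Ms) (tl Ms)) (apps N Ms))"
proof -
  define \<tau> where "\<tau> a = (case map_of (zip as Ms) a of Some M \<Rightarrow> M | None \<Rightarrow> Var a)" for a
  have \<tau>_as: "map \<tau> as = Ms"
    by (rule nth_equalityI) (simp_all add: \<tau>_def assms(1,5) map_of_zip_nth)
  have \<tau>_other: "\<tau> a = Var a" if "a \<notin> set as" for a
  proof -
    have "fst ` set (zip as Ms) = set as"
      by (metis assms(5) map_fst_zip set_map)
    then have "map_of (zip as Ms) a = None"
      using that by (simp add: map_of_eq_None_iff)
    then show ?thesis
      by (simp add: \<tau>_def)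
  qed
  have N: "psub \<tau> 0 N = N"
    by (rule psub_fv_id) (use assms(3) \<tau>_other in auto)
  have args: "psub \<tau> 0 (apps N (map Var as)) = apps N Ms"
    using \<tau>_as by (simp add: psub_apps N comp_def)
  have head: "psub \<tau> 0 (apps (Var (hd as)) (map Var (tl as))) = apps (hd Ms) (tl Ms)"
    using assms(2) \<tau>_as by (cases as) (auto simp: psub_apps comp_def)
  show ?thesis
    using beta_eq_psub[OF eq, of \<tau> 0] by (simp only: psub.simps(2) head args)
qed

lemma beta_apps: "beta s t \<Longrightarrow> beta (apps s Ps) (apps t Ps)"
  unfolding apps_def by (induction Ps arbitrary: s t) (auto intro: beta.appL)

lemma beta_apps_I_Cons: "beta (apps I_comb (M # Ms)) (apps M Ms)"
proof -
  have "beta (App I_comb M) M"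
    unfolding I_comb_def using beta.beta[of "Var 0" M] by simp
  then show ?thesis
    using beta_apps by (simp add: apps_def)
qed

lemma beta_eq_apps_Is: "beta_eq (apps (hd (replicate m I_comb @ [M])) (tl (replicate m I_comb @ [M]))) M"
proof (induction m)
  case 0
  show ?case by (simp add: apps_def beta_eq_def)
next
  case (Suc m)
  let ?Ps = "replicate m I_comb @ [M]"
  have "beta (apps I_comb ?Ps) (apps (hd ?Ps) (tl ?Ps))"
    using beta_apps_I_Cons[of "hd ?Ps" "tl ?Ps"] by simp
  then show ?case
    using Suc.IH by (auto intro: beta_eq_trans beta_into_beta_eq)
qed

theorem proposition3p10:
  fixes N :: dB and as :: "nat list" and n :: nat
  assumes "n \<ge> 1"
    and "length as = n"
    and "distinct as"
    and "\<forall>a \<in> set as. a \<notin> fv N"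
    and "beta_eq (apps N (map Var as)) (App (apps (Var (hd as)) (map Var (tl as))) (apps N (map Var as)))"
  shows "is_fpc (apps N (replicate (n - 1) I_comb))"
  unfolding is_fpc_def
proof (intro allI impI)
  fix x
  let ?Y = "apps N (replicate (n - 1) I_comb)"
  let ?Ms = "replicate (n - 1) I_comb @ [Var x]"
  have "as \<noteq> []" "length ?Ms = length as"
    using assms(1,2) by auto
  then have "beta_eq (apps N ?Ms) (App (apps (hd ?Ms) (tl ?Ms)) (apps N ?Ms))"
    using beta_eq_apps_instance assms(3-5) by blast
  then have "beta_eq (App ?Y (Var x)) (App (apps (hd ?Ms) (tl ?Ms)) (App ?Y (Var x)))"
    by (simp add: apps_def)
  also have "beta_eq \<dots> (App (Var x) (App ?Y (Var x)))"
    by (rule beta_eq_appL[OF beta_eq_apps_Is])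
  finally show "beta_eq (App ?Y (Var x)) (App (Var x) (App ?Y (Var x)))" .
qed

end
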